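(* For every finitely supported permutation $\tau$ of $[0,1[$ and every partition $\mathcal P$ associated with $\tau$, one has $\varepsilon(\tau,\mathcal P)=\operatorname{sgn}(\tau)$.
   Context: $X=[0,1[$; $\widehat{\operatorname{PC}^{\bowtie}}$ is the group of bijections $X\to X$ continuous outside a finite subset, which contains the group ${\mathfrak S}_{\mathrm{fin}}$ of finitely supported permutations; $\operatorname{sgn}:{\mathfrak S}_{\mathrm{fin}}\to\mathbb{Z}/2\mathbb{Z}$ is the classical signature. For $h\in\widehat{\operatorname{PC}^{\bowtie}}$, a partition associated with $h$ is a finite partition $\mathcal P=\{I_1,\dots,I_n\}$ of $X$ into intervals $I_j=[\alpha_j,b_j[$ such that $h$ is continuous on the open interval $I_j^\circ=]\alpha_j,b_j[$ for each $j$ (then $h$ is strictly monotone on $I_j^\circ$ and $h(I_j^\circ)$ is an open interval). Let $\beta_j$ be the left endpoint of $h(I_j^\circ)$; the sets $\{h(\alpha_j)\}$ and $\{\beta_j\}$ coincide, and $\sigma_{(h,\mathcal P)}\in{\mathfrak S}_{\mathrm{fin}}$ sends $h(\alpha_j)$ to $\beta_j$ for each $j$ and fixes all other points. $R(h,\mathcal P)$ is the number of $j$ with $h$ decreasing on $I_j^\circ$, and $\varepsilon(h,\mathcal P)=R(h,\mathcal P)+\operatorname{sgn}(\sigma_{(h,\mathcal P)})\bmod 2$. *)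

theory Defs
  imports "HOL-Analysis.Analysis" "HOL-Combinatorics.Permutations"
begin

definition X :: "real set" where "X = {0..<1}"

text \<open>Classical signature with values in Z/2Z, encoded as 0/1 :: nat.\<close>
definition sgn2 :: "(real \<Rightarrow> real) \<Rightarrow> nat" where
  "sgn2 p = (if evenperm p then 0 else 1)"

definition lend :: "real set \<Rightarrow> real" where "lend I = Inf I"
definition rend :: "real set \<Rightarrow> real" where "rend I = Sup I"
definition opn :: "real set \<Rightarrow> real set" where "opn I = {lend I<..<rend I}"

definition assoc_partition :: "(real \<Rightarrow> real) \<Rightarrow> real set set \<Rightarrow> bool" where
  "assoc_partition h P \<longleftrightarrow> finite P \<and> \<Union>P = X \<and>
     (\<forall>I\<in>P. \<forall>J\<in>P. I \<noteq> J \<longrightarrow> I \<inter> J = {}) \<and>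
     (\<forall>I\<in>P. \<exists>a b. a < b \<and> I = {a..<b} \<and> continuous_on {a<..<b} h)"

definition beta :: "(real \<Rightarrow> real) \<Rightarrow> real set \<Rightarrow> real" where
  "beta h I = Inf (h ` opn I)"

definition sigma :: "(real \<Rightarrow> real) \<Rightarrow> real set set \<Rightarrow> real \<Rightarrow> real" where
  "sigma h P x = (if \<exists>I\<in>P. h (lend I) = x
      then beta h (THE I. I \<in> P \<and> h (lend I) = x) else x)"

definition R :: "(real \<Rightarrow> real) \<Rightarrow> real set set \<Rightarrow> nat" where
  "R h P = card {I \<in> P. \<forall>x\<in>opn I. \<forall>y\<in>opn I. x < y \<longrightarrow> h y < h x}"

definition eps :: "(real \<Rightarrow> real) \<Rightarrow> real set set \<Rightarrow> nat" where
  "eps h P = (R h P + sgn2 (sigma h P)) mod 2"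

end

theory Submission
  imports Defs
begin

text \<open>A finitely supported permutation that is continuous on an open interval is the identity
  there: near any point of the interval all but finitely many points are fixed, so the limit of
  the permutation at that point is the point itself. Hence on every interval of an associated
  partition the permutation is the identity; no interval is decreasing, each \<open>\<beta>\<^sub>j\<close> equals
  \<open>\<alpha>\<^sub>j\<close>, and \<open>\<sigma>\<close> maps \<open>\<tau>(\<alpha>\<^sub>j)\<close> back to \<open>\<alpha>\<^sub>j\<close> while every other point is fixed by both \<open>\<tau>\<close>
  and \<open>\<sigma>\<close>. So \<open>\<sigma> = \<tau>\<inverse>\<close>, which has the signature of \<open>\<tau>\<close>.\<close>

lemma eventually_at_not_in_finite:
  fixes x :: "'a::t1_space"
  assumes "finite F"
  shows "\<forall>\<^sub>F y in at x. y \<notin> F"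
  unfolding eventually_at_topological
proof (intro exI conjI ballI impI)
  show "open (- (F - {x}))"
    using assms by (intro open_Compl finite_imp_closed) simp
qed auto

lemma continuous_on_finite_support_imp_fixed:
  fixes h :: "'a::{perfect_space, t2_space} \<Rightarrow> 'a"
  assumes "open S" and "continuous_on S h" and "finite {y. h y \<noteq> y}" and "x \<in> S"
  shows "h x = x"
proof -
  have "(h \<longlongrightarrow> h x) (at x)"
    using assms(1,2,4) continuous_on_eq_continuous_at isCont_def by blast
  moreover have "(h \<longlongrightarrow> x) (at x)"
  proof (rule Lim_transform_eventually)
    show "\<forall>\<^sub>F y in at x. y = h y"
      using eventually_at_not_in_finite[OF assms(3)] by (rule eventually_mono) auto
  qed (rule tendsto_ident_at)
  ultimately show ?thesis
    using tendsto_unique[OF at_neq_bot] by blast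
qed

lemma lend_atLeastLessThan: "a < b \<Longrightarrow> lend {a..<b} = a"
  by (simp add: lend_def)

lemma opn_atLeastLessThan: "a < b \<Longrightarrow> opn {a..<b} = {a<..<b}"
  by (simp add: opn_def lend_def rend_def)

lemma assoc_partition_memE:
  assumes "assoc_partition h P" and "I \<in> P"
  obtains a b where "a < b" and "I = {a..<b}" and "lend I = a" and "opn I = {a<..<b}"
    and "continuous_on (opn I) h"
  using assms unfolding assoc_partition_def
  by (metis lend_atLeastLessThan opn_atLeastLessThan)

lemma assoc_partition_lend_mem:
  assumes "assoc_partition h P" and "I \<in> P"
  shows "lend I \<in> I"
  using assms by (rule assoc_partition_memE) auto

lemma assoc_partition_inj_on_lend:
  assumes "assoc_partition h P"
  shows "inj_on lend P"
proof (rule inj_onI)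
  fix I J assume "I \<in> P" and "J \<in> P" and "lend I = lend J"
  moreover have "lend I \<in> I" and "lend J \<in> J"
    using \<open>I \<in> P\<close> \<open>J \<in> P\<close> by (simp_all add: assoc_partition_lend_mem[OF assms])
  ultimately have "lend I \<in> I \<inter> J"
    by simp
  with \<open>I \<in> P\<close> \<open>J \<in> P\<close> assms show "I = J"
    unfolding assoc_partition_def by blast
qed

lemma assoc_partition_finite_support_fixes_opn:
  assumes "assoc_partition h P" and "finite {y. h y \<noteq> y}" and "I \<in> P" and "x \<in> opn I"
  shows "h x = x"
  using assms(1,3)
proof (rule assoc_partition_memE)
  show "continuous_on (opn I) h \<Longrightarrow> opn I = {a<..<b} \<Longrightarrow> h x = x" for a b
    using continuous_on_finite_support_imp_fixed[OF _ _ assms(2,4)] by simp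
qed

lemma R_eq_0_if_fixes_opn:
  assumes "assoc_partition h P" and fixes_opn: "\<And>I x. I \<in> P \<Longrightarrow> x \<in> opn I \<Longrightarrow> h x = x"
  shows "R h P = 0"
proof -
  have "\<not> (\<forall>x\<in>opn I. \<forall>y\<in>opn I. x < y \<longrightarrow> h y < h x)" if "I \<in> P" for I
    using assms(1) \<open>I \<in> P\<close>
  proof (rule assoc_partition_memE)
    fix a b assume "a < b" and opn_I: "opn I = {a<..<b}"
    obtain x where "a < x" "x < b"
      using \<open>a < b\<close> dense by blast
    obtain y where "x < y" "y < b"
      using \<open>x < b\<close> dense by blast
    have "x \<in> opn I" and "y \<in> opn I"
      using \<open>a < x\<close> \<open>x < y\<close> \<open>y < b\<close> by (simp_all add: opn_I)
    moreover have "h x = x" and "h y = y"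
      using calculation fixes_opn[OF \<open>I \<in> P\<close>] by simp_all
    ultimately show ?thesis
      using \<open>x < y\<close> by fastforce
  qed
  then have "{I \<in> P. \<forall>x\<in>opn I. \<forall>y\<in>opn I. x < y \<longrightarrow> h y < h x} = {}"
    by blast
  then show ?thesis
    unfolding R_def by (simp only: card.empty)
qed

lemma beta_eq_lend_if_fixes_opn:
  assumes "assoc_partition h P" and "I \<in> P" and "\<And>x. x \<in> opn I \<Longrightarrow> h x = x"
  shows "beta h I = lend I"
  using assms(1,2)
proof (rule assoc_partition_memE)
  fix a b assume "a < b" and "lend I = a" and opn_I: "opn I = {a<..<b}"
  have "h ` opn I = opn I"
    using assms(3) by (simp add: image_cong)
  with \<open>a < b\<close> \<open>lend I = a\<close> show ?thesis
    by (simp add: beta_def opn_I)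
qed

lemma sigma_eq_inv_if_fixes_opn:
  assumes "h permutes X" and partition: "assoc_partition h P"
    and fixes_opn: "\<And>I x. I \<in> P \<Longrightarrow> x \<in> opn I \<Longrightarrow> h x = x"
  shows "sigma h P = inv h"
proof -
  have inj: "inj h"
    using assms(1) permutes_inj by blast
  have sigma_h: "sigma h P (h x) = x" for x
  proof (cases "\<exists>I\<in>P. lend I = x")
    case True
    then obtain I where "I \<in> P" and "lend I = x" by blast
    have "(THE J. J \<in> P \<and> h (lend J) = h x) = I"
    proof (rule the_equality)
      show "J = I" if "J \<in> P \<and> h (lend J) = h x" for J
      proof (rule inj_onD[OF assoc_partition_inj_on_lend[OF partition]])
        show "lend J = lend I"
          using that \<open>lend I = x\<close> by (simp add: inj_eq[OF inj])
      qed (use that \<open>I \<in> P\<close> in auto)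
    qed (use \<open>I \<in> P\<close> \<open>lend I = x\<close> in simp)
    moreover have "\<exists>J\<in>P. h (lend J) = h x"
      using \<open>I \<in> P\<close> \<open>lend I = x\<close> by blast
    ultimately have "sigma h P (h x) = beta h I"
      unfolding sigma_def by simp
    also have "\<dots> = x"
      using beta_eq_lend_if_fixes_opn[OF partition \<open>I \<in> P\<close> fixes_opn[OF \<open>I \<in> P\<close>]] \<open>lend I = x\<close> by simp
    finally show ?thesis .
  next
    case False
    have "h x = x"
    proof (cases "x \<in> X")
      case True
      then have "x \<in> \<Union>P"
        using partition by (simp add: assoc_partition_def)
      then obtain I where "I \<in> P" and "x \<in> I"
        by blast
      from partition \<open>I \<in> P\<close> have "x \<in> opn I"
      proof (rule assoc_partition_memE)
        fix a b assume "I = {a..<b}" and "lend I = a" and "opn I = {a<..<b}"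
        moreover have "x \<noteq> a"
          using False \<open>I \<in> P\<close> \<open>lend I = a\<close> by blast
        ultimately show "x \<in> opn I"
          using \<open>x \<in> I\<close> by simp
      qed
      with \<open>I \<in> P\<close> show ?thesis by (rule fixes_opn)
    qed (rule permutes_not_in[OF assms(1)])
    moreover have "\<not> (\<exists>J\<in>P. h (lend J) = h x)"
      using False by (simp add: inj_eq[OF inj])
    ultimately show ?thesis
      unfolding sigma_def by simp
  qed
  show ?thesis
  proof (rule inv_equality[symmetric])
    show "h (sigma h P y) = y" for y
      using sigma_h[of "inv h y"] surj_f_inv_f[OF permutes_surj[OF assms(1)]] by simp
  qed (rule sigma_h)
qed

theorem proposition3p4:
  fixes \<tau> :: "real \<Rightarrow> real" and P :: "real set set"
  assumes "\<tau> permutes X" and "finite {x. \<tau> x \<noteq> x}"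
    and "assoc_partition \<tau> P"
  shows "eps \<tau> P = sgn2 \<tau>"
proof -
  have fixes_opn: "\<And>I x. I \<in> P \<Longrightarrow> x \<in> opn I \<Longrightarrow> \<tau> x = x"
    using assoc_partition_finite_support_fixes_opn[OF assms(3,2)] .
  have "R \<tau> P = 0"
    using assms(3) fixes_opn by (rule R_eq_0_if_fixes_opn)
  moreover have "sigma \<tau> P = inv \<tau>"
    using assms(1,3) fixes_opn by (rule sigma_eq_inv_if_fixes_opn)
  moreover have "evenperm (inv \<tau>) = evenperm \<tau>"
    using assms(1,2) by (intro evenperm_inv) (simp add: permutation permutes_bij)
  ultimately show ?thesis
    by (simp add: eps_def sgn2_def)
qed

end
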